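(* Let $0\le k<n$, let $P_1,\dots,P_n$ be pairwise distinct columns of $\mathbb{S}$, and let $y_1\in P_1,\dots,y_k\in P_k$. Let $(\varepsilon_i^j)$ be any family in $\{0,1\}$ indexed by pairs $1\le i<j\le n$ with $j>k$. Then there exist $y_{k+1}\in P_{k+1},\dots,y_n\in P_n$ such that for all $1\le i<j\le n$ with $j>k$: $y_i\to y_j$ iff $\varepsilon_i^j=1$.
   Context: Directed graphs are simple and loopless ($x\to y$ denotes a directed edge, at most one direction between two distinct vertices). $\mathcal{S}$ is the class of finite such graphs in which $x\perp y:\Leftrightarrow\neg(x\to y\vee y\to x)$ is an equivalence relation (its classes are called columns) and satisfying the parity condition: for $x_1\neq x_2$, $y_1\neq y_2$ with $x_1\perp x_2$, $y_1\perp y_2$, the number of directed edges from $\{x_1,x_2\}$ to $\{y_1,y_2\}$ is even. $\mathbb{S}$ (the semigeneric directed graph) is the Fraïssé limit of $\mathcal{S}$, i.e. the countable homogeneous directed graph whose finite induced substructures are exactly the members of $\mathcal{S}$ up to isomorphism. *)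

theory Defs
  imports Main "HOL-Library.Countable_Set"
begin

text \<open>Directed graphs are given by an edge relation E; the vertex set is a set A
  (for finite graphs) or the whole type (for the limit S).\<close>

definition perp :: "('v \<Rightarrow> 'v \<Rightarrow> bool) \<Rightarrow> 'v \<Rightarrow> 'v \<Rightarrow> bool" where
  "perp E x y \<longleftrightarrow> \<not> (E x y \<or> E y x)"

definition perp_rel :: "'v set \<Rightarrow> ('v \<Rightarrow> 'v \<Rightarrow> bool) \<Rightarrow> ('v \<times> 'v) set" where
  "perp_rel A E = {(x, y). x \<in> A \<and> y \<in> A \<and> perp E x y}"

definition in_classS :: "'v set \<Rightarrow> ('v \<Rightarrow> 'v \<Rightarrow> bool) \<Rightarrow> bool" where
  "in_classS A E \<longleftrightarrow>
     finite A \<and>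
     (\<forall>x\<in>A. \<not> E x x) \<and>
     (\<forall>x\<in>A. \<forall>y\<in>A. \<not> (E x y \<and> E y x)) \<and>
     equiv A (perp_rel A E) \<and>
     (\<forall>x1\<in>A. \<forall>x2\<in>A. \<forall>y1\<in>A. \<forall>y2\<in>A.
        x1 \<noteq> x2 \<and> y1 \<noteq> y2 \<and> perp E x1 x2 \<and> perp E y1 y2 \<longrightarrow>
        even (card {(a, b). a \<in> {x1, x2} \<and> b \<in> {y1, y2} \<and> E a b}))"

text \<open>Every finite member of S is isomorphic to one
  with vertices in nat, so it suffices to require that those embed.  By Fraisse's
  theorem such a graph is unique up to isomorphism.\<close>
definition semigeneric :: "('a \<Rightarrow> 'a \<Rightarrow> bool) \<Rightarrow> bool" where
  "semigeneric E \<longleftrightarrow>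
     countable (UNIV :: 'a set) \<and>
     (\<forall>B :: 'a set. finite B \<longrightarrow> in_classS B E) \<and>
     (\<forall>(A :: nat set) F. in_classS A F \<longrightarrow>
        (\<exists>f. inj_on f A \<and> (\<forall>x\<in>A. \<forall>y\<in>A. F x y \<longleftrightarrow> E (f x) (f y)))) \<and>
     (\<forall>A B (f :: 'a \<Rightarrow> 'a). finite A \<and> bij_betw f A B \<and>
        (\<forall>x\<in>A. \<forall>y\<in>A. E x y \<longleftrightarrow> E (f x) (f y)) \<longrightarrow>
        (\<exists>g. bij g \<and> (\<forall>x y. E x y \<longleftrightarrow> E (g x) (g y)) \<and> (\<forall>x\<in>A. g x = f x)))"

definition columns :: "('a \<Rightarrow> 'a \<Rightarrow> bool) \<Rightarrow> 'a set set" where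
  "columns E = UNIV // {(x, y). perp E x y}"

end

theory Submission
  imports Defs
begin

text \<open>Being the Fraisse limit of the class S, the semigeneric graph has the extension property:
  every one-point extension in S of a finite induced subgraph is realised inside it (embed the
  extended graph, then move the embedded copy back by homogeneity). If a finite set \<open>A\<close> meets
  each column at most once and \<open>q\<close> lies outside the columns of \<open>A\<close>, adding a new vertex to the
  column of \<open>q\<close> with arbitrary edge directions from \<open>A\<close> stays in S: the only non-trivial column
  of the extended graph is that two-element set, which spans no edge, so the parity condition
  holds trivially. Choosing \<open>y (k + 1), \<dots>, y n\<close> one at a time by this extension property proves
  the lemma.\<close>

lemma semigenericD:
  assumes "semigeneric E"
  shows semigeneric_in_classS: "finite B \<Longrightarrow> in_classS B E"
    and semigeneric_embeds_nat: "in_classS (A :: nat set) F \<Longrightarrow>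
      \<exists>f. inj_on f A \<and> (\<forall>x\<in>A. \<forall>y\<in>A. F x y \<longleftrightarrow> E (f x) (f y))"
    and semigeneric_homogeneous: "finite X \<Longrightarrow> bij_betw h X Y \<Longrightarrow>
      (\<forall>x\<in>X. \<forall>y\<in>X. E x y \<longleftrightarrow> E (h x) (h y)) \<Longrightarrow>
      \<exists>g. bij g \<and> (\<forall>x y. E x y \<longleftrightarrow> E (g x) (g y)) \<and> (\<forall>x\<in>X. g x = h x)"
  using assms unfolding semigeneric_def by simp_all

lemma in_classSD:
  assumes "in_classS A E"
  shows in_classS_finite: "finite A"
    and in_classS_irrefl: "x \<in> A \<Longrightarrow> \<not> E x x"
    and in_classS_asym: "x \<in> A \<Longrightarrow> y \<in> A \<Longrightarrow> \<not> (E x y \<and> E y x)"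
    and in_classS_equiv: "equiv A (perp_rel A E)"
    and in_classS_parity: "x1 \<in> A \<Longrightarrow> x2 \<in> A \<Longrightarrow> y1 \<in> A \<Longrightarrow> y2 \<in> A \<Longrightarrow>
      x1 \<noteq> x2 \<Longrightarrow> y1 \<noteq> y2 \<Longrightarrow> perp E x1 x2 \<Longrightarrow> perp E y1 y2 \<Longrightarrow>
      even (card {(a, b). a \<in> {x1, x2} \<and> b \<in> {y1, y2} \<and> E a b})"
  using assms unfolding in_classS_def by simp_all

lemma in_classSI:
  assumes "finite A" and "\<And>x. x \<in> A \<Longrightarrow> \<not> E x x"
    and "\<And>x y. x \<in> A \<Longrightarrow> y \<in> A \<Longrightarrow> \<not> (E x y \<and> E y x)"
    and "equiv A (perp_rel A E)"
    and "\<And>x1 x2 y1 y2. x1 \<in> A \<Longrightarrow> x2 \<in> A \<Longrightarrow> y1 \<in> A \<Longrightarrow> y2 \<in> A \<Longrightarrow>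
      x1 \<noteq> x2 \<Longrightarrow> y1 \<noteq> y2 \<Longrightarrow> perp E x1 x2 \<Longrightarrow> perp E y1 y2 \<Longrightarrow>
      even (card {(a, b). a \<in> {x1, x2} \<and> b \<in> {y1, y2} \<and> E a b})"
  shows "in_classS A E"
  using assms unfolding in_classS_def by simp

lemma in_classS_iso:
  assumes cls: "in_classS A F" and g: "bij_betw g B A"
  shows "in_classS B (\<lambda>u v. F (g u) (g v))" (is "in_classS B ?F")
proof -
  have gB: "g u \<in> A" if "u \<in> B" for u using g that by (auto simp: bij_betw_def)
  have ginj: "g u = g v \<longleftrightarrow> u = v" if "u \<in> B" "v \<in> B" for u v
    using g that by (auto simp: bij_betw_def inj_on_def)
  have rel: "(u, v) \<in> perp_rel B ?F \<longleftrightarrow> u \<in> B \<and> v \<in> B \<and> (g u, g v) \<in> perp_rel A F" for u v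
    using gB by (auto simp: perp_rel_def perp_def)
  have equivA: "equiv A (perp_rel A F)" by (rule in_classS_equiv[OF cls])
  have "equiv B (perp_rel B ?F)"
  proof (rule equivI)
    show "refl_on B (perp_rel B ?F)"
      using equivA gB by (auto simp: rel equiv_def refl_on_def)
    show "sym (perp_rel B ?F)"
      using equivA by (auto simp: rel equiv_def intro!: symI dest: symD)
    show "trans (perp_rel B ?F)"
      using equivA by (auto simp: rel equiv_def intro!: transI dest: transD)
  qed (auto simp: rel)
  moreover have "even (card {(a, b). a \<in> {x1, x2} \<and> b \<in> {y1, y2} \<and> ?F a b})"
    if B: "x1 \<in> B" "x2 \<in> B" "y1 \<in> B" "y2 \<in> B"
      and h: "x1 \<noteq> x2" "y1 \<noteq> y2" "perp ?F x1 x2" "perp ?F y1 y2" for x1 x2 y1 y2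
  proof -
    let ?S = "{(a, b). a \<in> {x1, x2} \<and> b \<in> {y1, y2} \<and> ?F a b}"
    have "inj_on (map_prod g g) ?S"
      by (rule inj_on_subset[OF map_prod_inj_on]) (use g B in \<open>auto simp: bij_betw_def\<close>)
    then have "card ?S = card (map_prod g g ` ?S)" by (rule card_image[symmetric])
    also have "map_prod g g ` ?S = {(a, b). a \<in> {g x1, g x2} \<and> b \<in> {g y1, g y2} \<and> F a b}"
      by auto
    also have "even (card \<dots>)"
      using in_classS_parity[OF cls] B h gB ginj by (simp add: perp_def)
    finally show ?thesis .
  qed
  moreover have "finite B" using in_classS_finite[OF cls] g by (simp add: bij_betw_finite)
  ultimately show ?thesis
    using in_classSD[OF cls] gB by (intro in_classSI) simp_all
qed

text \<open>The embedding clause of \<open>semigeneric\<close> only speaks of graphs on \<open>nat\<close>;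
  transport along a bijection with \<open>{0..<card A}\<close>.\<close>

lemma semigeneric_embeds:
  assumes sg: "semigeneric E" and cls: "in_classS A F"
  shows "\<exists>f. inj_on f A \<and> (\<forall>x\<in>A. \<forall>y\<in>A. F x y \<longleftrightarrow> E (f x) (f y))"
proof -
  obtain h where h: "bij_betw h A {0..<card A}"
    using ex_bij_betw_finite_nat[OF in_classS_finite[OF cls]] by blast
  let ?g = "inv_into A h"
  obtain f where f: "inj_on f {0..<card A}"
    and pres: "\<forall>u\<in>{0..<card A}. \<forall>v\<in>{0..<card A}. F (?g u) (?g v) \<longleftrightarrow> E (f u) (f v)"
    using semigeneric_embeds_nat[OF sg in_classS_iso[OF cls bij_betw_inv_into[OF h]]] by blast
  have gh: "?g (h x) = x" if "x \<in> A" for x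
    using h that by (simp add: bij_betw_def)
  have "inj_on (f \<circ> h) A"
    using h f by (simp add: bij_betw_def comp_inj_on)
  moreover have "\<forall>x\<in>A. \<forall>y\<in>A. F x y \<longleftrightarrow> E ((f \<circ> h) x) ((f \<circ> h) y)"
  proof (intro ballI)
    fix x y assume "x \<in> A" "y \<in> A"
    then have "h x \<in> {0..<card A}" "h y \<in> {0..<card A}" using bij_betwE[OF h] by blast+
    then have "F (?g (h x)) (?g (h y)) \<longleftrightarrow> E (f (h x)) (f (h y))" using pres by blast
    then show "F x y \<longleftrightarrow> E ((f \<circ> h) x) ((f \<circ> h) y)"
      using gh \<open>x \<in> A\<close> \<open>y \<in> A\<close> by simp
  qed
  ultimately show ?thesis by blast
qed

lemma perp_sym: "perp E x y \<longleftrightarrow> perp E y x"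
  by (auto simp: perp_def)

lemma semigeneric_irrefl: "semigeneric E \<Longrightarrow> \<not> E x x"
  using in_classS_irrefl[OF semigeneric_in_classS, of E "{x}"] by simp

lemma semigeneric_asym: "semigeneric E \<Longrightarrow> \<not> (E x y \<and> E y x)"
  using in_classS_asym[OF semigeneric_in_classS, of E "{x, y}"] by simp

lemma semigeneric_equiv_perp:
  assumes sg: "semigeneric E"
  shows "equiv UNIV {(x, y). perp E x y}"
proof (rule equivI)
  show "refl_on UNIV {(x, y). perp E x y}"
    by (rule refl_onI) (simp_all add: perp_def semigeneric_irrefl[OF sg])
  show "sym {(x, y). perp E x y}"
    by (rule symI) (auto simp: perp_def)
  show "trans {(x, y). perp E x y}"
  proof (rule transI)
    fix x y z assume "(x, y) \<in> {(x, y). perp E x y}" "(y, z) \<in> {(x, y). perp E x y}"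
    have "trans (perp_rel {x, y, z} E)"
      using in_classS_equiv[OF semigeneric_in_classS[OF sg]] by (simp add: equiv_def)
    moreover from \<open>(x, y) \<in> _\<close> \<open>(y, z) \<in> _\<close>
    have "(x, y) \<in> perp_rel {x, y, z} E" "(y, z) \<in> perp_rel {x, y, z} E"
      by (auto simp: perp_rel_def)
    ultimately have "(x, z) \<in> perp_rel {x, y, z} E" by (rule transD)
    then show "(x, z) \<in> {(x, y). perp E x y}" by (simp add: perp_rel_def)
  qed
qed auto

lemma semigeneric_one_point_extension:
  assumes sg: "semigeneric E" and fin: "finite C"
    and cls: "in_classS (insert None (Some ` C)) F"
    and restr: "\<forall>a\<in>C. \<forall>b\<in>C. F (Some a) (Some b) \<longleftrightarrow> E a b"
  shows "\<exists>w. \<forall>a\<in>C. (E a w \<longleftrightarrow> F (Some a) None) \<and> (E w a \<longleftrightarrow> F None (Some a))"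
proof -
  obtain e where e: "inj_on e (insert None (Some ` C))"
    and e_pres: "\<forall>u\<in>insert None (Some ` C). \<forall>v\<in>insert None (Some ` C). F u v \<longleftrightarrow> E (e u) (e v)"
    using semigeneric_embeds[OF sg cls] by blast
  have "inj_on (e \<circ> Some) C"
    using e by (simp add: inj_on_def)
  then have bij: "bij_betw (e \<circ> Some) C ((e \<circ> Some) ` C)"
    by (simp add: bij_betw_def)
  have pres: "\<forall>a\<in>C. \<forall>b\<in>C. E a b \<longleftrightarrow> E ((e \<circ> Some) a) ((e \<circ> Some) b)"
    using restr e_pres by simp
  obtain g where g: "bij g" and g_aut: "\<forall>x y. E x y \<longleftrightarrow> E (g x) (g y)"
    and g_ext: "\<forall>a\<in>C. g a = (e \<circ> Some) a"
    using semigeneric_homogeneous[OF sg fin bij pres] by iprover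
  define w where "w = inv g (e None)"
  have "g w = e None" using g by (simp add: w_def bij_is_surj surj_f_inv_f)
  have "E a w \<longleftrightarrow> F (Some a) None" "E w a \<longleftrightarrow> F None (Some a)" if "a \<in> C" for a
  proof -
    have "E a w \<longleftrightarrow> E (g a) (g w)" "E w a \<longleftrightarrow> E (g w) (g a)" using g_aut by blast+
    then show "E a w \<longleftrightarrow> F (Some a) None" "E w a \<longleftrightarrow> F None (Some a)"
      using \<open>g w = e None\<close> g_ext e_pres that by simp_all
  qed
  then show ?thesis by blast
qed

text \<open>On \<open>insert None (Some ` insert q A)\<close> the new vertex \<open>None\<close> has no edge to
  \<open>Some q\<close>, so it joins the column of \<open>q\<close>; each \<open>a \<in> A\<close> points to it iff \<open>\<phi> a\<close>.\<close>

definition column_extension ::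
    "('a \<Rightarrow> 'a \<Rightarrow> bool) \<Rightarrow> 'a set \<Rightarrow> ('a \<Rightarrow> bool) \<Rightarrow> 'a option \<Rightarrow> 'a option \<Rightarrow> bool" where
  "column_extension E A \<phi> u v = (case (u, v) of
      (Some a, Some b) \<Rightarrow> E a b
    | (Some a, None) \<Rightarrow> a \<in> A \<and> \<phi> a
    | (None, Some b) \<Rightarrow> b \<in> A \<and> \<not> \<phi> b
    | (None, None) \<Rightarrow> False)"

lemma in_classS_column_extension:
  assumes sg: "semigeneric E" and fin: "finite A"
    and transversal: "\<forall>a\<in>A. \<forall>b\<in>A. perp E a b \<longrightarrow> a = b"
    and q: "\<forall>a\<in>A. \<not> perp E q a"
  shows "in_classS (insert None (Some ` insert q A)) (column_extension E A \<phi>)"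
proof -
  define V where "V = insert None (Some ` insert q A)"
  have "finite V" using fin by (simp add: V_def)
  let ?F = "column_extension E A \<phi>"
  have perp_refl: "perp E x x" for x by (simp add: perp_def semigeneric_irrefl[OF sg])
  then have "q \<notin> A" using q by blast
  have perp_iff: "perp ?F u v \<longleftrightarrow> u = v \<or> {u, v} = {Some q, None}"
    if "u \<in> V" "v \<in> V" for u v
  proof -
    have "perp E c d \<longleftrightarrow> c = d" if "c \<in> insert q A" "d \<in> insert q A" for c d
    proof
      assume "perp E c d"
      then show "c = d"
        using that transversal q perp_sym[of E c d] by auto
    qed (simp add: perp_refl)
    moreover have "perp ?F (Some c) (Some d) \<longleftrightarrow> perp E c d" for c d
      by (simp add: perp_def column_extension_def)
    moreover have "perp ?F (Some c) None \<longleftrightarrow> c \<notin> A" for c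
      by (auto simp: perp_def column_extension_def)
    moreover have "perp ?F None (Some c) \<longleftrightarrow> c \<notin> A" for c
      by (auto simp: perp_def column_extension_def)
    moreover have "perp ?F None None" by (simp add: perp_def column_extension_def)
    ultimately show ?thesis
      using that \<open>q \<notin> A\<close> by (auto simp: V_def doubleton_eq_iff)
  qed
  have no_edge: "\<not> ?F u v" if "u \<in> {Some q, None}" "v \<in> {Some q, None}" for u v
    using that \<open>q \<notin> A\<close> semigeneric_irrefl[OF sg] by (auto simp: column_extension_def)
  have rel: "(u, v) \<in> perp_rel V ?F \<longleftrightarrow> u \<in> V \<and> v \<in> V \<and> (u = v \<or> {u, v} = {Some q, None})"
    for u v using perp_iff by (auto simp: perp_rel_def)
  have "equiv V (perp_rel V ?F)"
  proof (rule equivI)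
    show "refl_on V (perp_rel V ?F)" by (rule refl_onI) (auto simp: rel)
    show "sym (perp_rel V ?F)" by (rule symI) (auto simp: rel insert_commute)
    show "trans (perp_rel V ?F)" by (rule transI) (auto simp: rel doubleton_eq_iff)
  qed (auto simp: rel)
  moreover have "even (card {(a, b). a \<in> {x1, x2} \<and> b \<in> {y1, y2} \<and> ?F a b})"
    if "x1 \<in> V" "x2 \<in> V" "y1 \<in> V" "y2 \<in> V"
      and "x1 \<noteq> x2" "y1 \<noteq> y2" "perp ?F x1 x2" "perp ?F y1 y2" for x1 x2 y1 y2
  proof -
    have "{x1, x2} = {Some q, None}" "{y1, y2} = {Some q, None}"
      using perp_iff[OF that(1,2)] perp_iff[OF that(3,4)] that(5-8) by simp_all
    then have "{(a, b). a \<in> {x1, x2} \<and> b \<in> {y1, y2} \<and> ?F a b} = {}"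
      using no_edge by (simp only:) blast
    then show ?thesis by (simp only: card.empty even_zero)
  qed
  moreover have "\<not> ?F u u" for u
    using semigeneric_irrefl[OF sg] by (simp add: column_extension_def split: option.split)
  moreover have "\<not> (?F u v \<and> ?F v u)" for u v
    using semigeneric_asym[OF sg] by (auto simp: column_extension_def split: option.split)
  ultimately show ?thesis
    using \<open>finite V\<close> unfolding V_def[symmetric] by (intro in_classSI) simp_all
qed

lemma semigeneric_extension_in_column:
  assumes sg: "semigeneric E" and fin: "finite A"
    and transversal: "\<forall>a\<in>A. \<forall>b\<in>A. perp E a b \<longrightarrow> a = b"
    and q: "\<forall>a\<in>A. \<not> perp E q a"
  shows "\<exists>w. perp E w q \<and> (\<forall>a\<in>A. E a w \<longleftrightarrow> \<phi> a)"
proof -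
  have "q \<notin> A" using q by (auto simp: perp_def semigeneric_irrefl[OF sg])
  obtain w where w: "\<forall>c\<in>insert q A.
      (E c w \<longleftrightarrow> column_extension E A \<phi> (Some c) None) \<and>
      (E w c \<longleftrightarrow> column_extension E A \<phi> None (Some c))"
    using semigeneric_one_point_extension[OF sg _ in_classS_column_extension[OF sg fin transversal q]]
      fin by (auto simp: column_extension_def)
  then have "perp E w q" using \<open>q \<notin> A\<close> by (simp add: perp_def column_extension_def)
  moreover have "\<forall>a\<in>A. E a w \<longleftrightarrow> \<phi> a" using w by (simp add: column_extension_def)
  ultimately show ?thesis by blast
qed

lemma semigeneric_column_iff_perp:
  assumes sg: "semigeneric E" and P: "P \<in> columns E" and a: "a \<in> P"
  shows "b \<in> P \<longleftrightarrow> perp E a b"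
proof
  assume "b \<in> P"
  with a have "(a, b) \<in> {(x, y). perp E x y}"
    using in_quotient_imp_in_rel[OF semigeneric_equiv_perp[OF sg]] P by (simp add: columns_def)
  then show "perp E a b" by simp
next
  assume "perp E a b"
  then show "b \<in> P"
    using in_quotient_imp_closed[OF semigeneric_equiv_perp[OF sg]] P a by (simp add: columns_def)
qed

lemma semigeneric_columns_not_perp:
  assumes sg: "semigeneric E" and "P \<in> columns E" and "Q \<in> columns E" and "P \<noteq> Q"
    and "a \<in> P" and "b \<in> Q"
  shows "\<not> perp E a b"
proof
  assume "perp E a b"
  then have "P = Q"
    using quotient_eqI[OF semigeneric_equiv_perp[OF sg]] assms by (simp add: columns_def)
  with \<open>P \<noteq> Q\<close> show False ..
qed

lemma semigeneric_column_nonempty: "semigeneric E \<Longrightarrow> P \<in> columns E \<Longrightarrow> P \<noteq> {}"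
  using in_quotient_imp_non_empty[OF semigeneric_equiv_perp] by (simp add: columns_def)

lemma semigeneric_point_in_column:
  assumes sg: "semigeneric E" and fin: "finite I"
    and cols: "\<forall>i\<in>insert j I. P i \<in> columns E" and inj: "inj_on P (insert j I)"
    and "j \<notin> I" and z: "\<forall>i\<in>I. z i \<in> P i"
  shows "\<exists>w\<in>P j. \<forall>i\<in>I. E (z i) w \<longleftrightarrow> \<phi> i"
proof -
  have not_perp: "\<not> perp E a b"
    if "i \<in> insert j I" "l \<in> insert j I" "i \<noteq> l" "a \<in> P i" "b \<in> P l" for i l a b
  proof -
    have "P i \<noteq> P l" using inj that(1-3) by (auto dest: inj_onD)
    then show ?thesis using semigeneric_columns_not_perp[OF sg] cols that by blast
  qed
  have z_inj: "inj_on z I"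
  proof (rule inj_onI)
    fix i l assume "i \<in> I" "l \<in> I" "z i = z l"
    show "i = l"
    proof (rule ccontr)
      assume "i \<noteq> l"
      then have "\<not> perp E (z i) (z l)" using not_perp z \<open>i \<in> I\<close> \<open>l \<in> I\<close> by blast
      with \<open>z i = z l\<close> show False by (simp add: perp_def semigeneric_irrefl[OF sg])
    qed
  qed
  obtain q where q: "q \<in> P j" using semigeneric_column_nonempty[OF sg] cols by blast
  have transversal: "\<forall>a\<in>z ` I. \<forall>b\<in>z ` I. perp E a b \<longrightarrow> a = b"
    using not_perp z by blast
  have q_not_perp: "\<forall>a\<in>z ` I. \<not> perp E q a"
    using not_perp z q \<open>j \<notin> I\<close> by fastforce
  obtain w where "perp E w q" and w: "\<forall>a\<in>z ` I. E a w \<longleftrightarrow> \<phi> (inv_into I z a)"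
    using semigeneric_extension_in_column[OF sg finite_imageI[OF fin] transversal q_not_perp] by iprover
  show ?thesis
  proof
    show "w \<in> P j"
      using semigeneric_column_iff_perp[OF sg _ q] cols \<open>perp E w q\<close> by (simp add: perp_sym)
    show "\<forall>i\<in>I. E (z i) w \<longleftrightarrow> \<phi> i" using w z_inj by simp
  qed
qed

lemma semigeneric_transversal_with_prescribed_edges:
  fixes k m :: nat
  assumes sg: "semigeneric E" and "k \<le> m"
    and "\<forall>i\<in>{1..m}. P i \<in> columns E" and "inj_on P {1..m}"
    and "\<forall>i\<in>{1..k}. y i \<in> P i"
  shows "\<exists>z. (\<forall>i\<in>{1..k}. z i = y i) \<and> (\<forall>i\<in>{1..m}. z i \<in> P i) \<and>
      (\<forall>i j. 1 \<le> i \<and> i < j \<and> j \<le> m \<and> k < j \<longrightarrow> (E (z i) (z j) \<longleftrightarrow> R i j))"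
  using assms(2-)
proof (induction m rule: dec_induct)
  case base
  then show ?case by (intro exI[of _ y]) auto
next
  case (step m)
  have cols: "\<forall>i\<in>insert (Suc m) {1..m}. P i \<in> columns E" and inj: "inj_on P (insert (Suc m) {1..m})"
    using step.prems(1,2) by (simp_all add: atLeastAtMostSuc_conv)
  then have "\<forall>i\<in>{1..m}. P i \<in> columns E" "inj_on P {1..m}" by (auto dest: inj_on_subset)
  from step.IH[OF this step.prems(3)]
  obtain z where z_fixed: "\<forall>i\<in>{1..k}. z i = y i" and z_col: "\<forall>i\<in>{1..m}. z i \<in> P i"
    and z_edges: "\<forall>i j. 1 \<le> i \<and> i < j \<and> j \<le> m \<and> k < j \<longrightarrow> (E (z i) (z j) \<longleftrightarrow> R i j)"
    by iprover
  from semigeneric_point_in_column[OF sg finite_atLeastAtMost cols inj _ z_col,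
      where \<phi> = "\<lambda>i. R i (Suc m)"]
  obtain w where "w \<in> P (Suc m)" and w: "\<forall>i\<in>{1..m}. E (z i) w \<longleftrightarrow> R i (Suc m)" by auto
  then show ?case
    using z_fixed z_col z_edges step.hyps
    by (intro exI[of _ "z(Suc m := w)"]) (auto simp: le_Suc_eq)
qed

theorem lemma1:
  fixes E :: "'a \<Rightarrow> 'a \<Rightarrow> bool"
    and n k :: nat
    and P :: "nat \<Rightarrow> 'a set"
    and y :: "nat \<Rightarrow> 'a"
    and \<epsilon> :: "nat \<Rightarrow> nat \<Rightarrow> nat"
  assumes "semigeneric E"
    and "k < n"
    and "\<forall>i\<in>{1..n}. P i \<in> columns E"
    and "inj_on P {1..n}"
    and "\<forall>i\<in>{1..k}. y i \<in> P i"
    and "\<forall>i j. 1 \<le> i \<and> i < j \<and> j \<le> n \<and> k < j \<longrightarrow> \<epsilon> i j \<in> {0, 1}"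
  shows "\<exists>z :: nat \<Rightarrow> 'a. (\<forall>i\<in>{1..k}. z i = y i) \<and> (\<forall>i\<in>{k+1..n}. z i \<in> P i) \<and>
           (\<forall>i j. 1 \<le> i \<and> i < j \<and> j \<le> n \<and> k < j \<longrightarrow> (E (z i) (z j) \<longleftrightarrow> \<epsilon> i j = 1))"
proof -
  from semigeneric_transversal_with_prescribed_edges[OF assms(1) _ assms(3-5),
      where R = "\<lambda>i j. \<epsilon> i j = 1"] assms(2)
  obtain z where "\<forall>i\<in>{1..k}. z i = y i" "\<forall>i\<in>{1..n}. z i \<in> P i"
    "\<forall>i j. 1 \<le> i \<and> i < j \<and> j \<le> n \<and> k < j \<longrightarrow> (E (z i) (z j) \<longleftrightarrow> \<epsilon> i j = 1)"
    by auto
  then show ?thesis by (intro exI[of _ z]) auto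
qed

end
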